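(* Let $X$ be the graph with vertices $x_0,x_1,x_2,x_3,x_4,\bar x_4$ and (besides loops) edges $x_0x_1, x_1x_2, x_2x_3, x_3x_4, x_4x_0, x_3\bar x_4, \bar x_4x_0$. Define $\tau:X\times X\to X$ by $\tau(x_i,x_j)=x_{i+j}$; $\tau(x_0,\bar x_4)=\tau(\bar x_4,x_0)=\bar x_4$; $\tau(x_i,\bar x_4)=\tau(\bar x_4,x_i)=x_{i+4}$ for $i\ne0$; $\tau(\bar x_4,\bar x_4)=x_3$ (subscripts mod 5). Then $\tau$ is $\mathrm{NP}_1$-continuous, $(X,x_0,\tau)$ is a unital (hence pointed) $\mathrm{NP}_1$-digital H-space, and $(X,x_0,\tau)$ is not pointed homotopy-associative; consequently it is not pointed H-equivalent to any $\mathrm{NP}_1$-digital topological group.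
   Context: Digital images are finite reflexive graphs; continuous maps send adjacent points to adjacent points. On products, $\mathrm{NP}_1$ declares two tuples adjacent iff they differ in at most one coordinate, and in that coordinate the entries are adjacent. An $\mathrm{NP}_1$-homotopy from $f$ to $g:X\to Y$ is an $\mathrm{NP}_1$-continuous $H:X\times[0,m]_{\mathbb{Z}}\to Y$ with $H(\cdot,0)=f$, $H(\cdot,m)=g$; for pointed maps $(X,a)\to(Y,b)$ it is pointed if $H(a,t)=b$ for all $t$. An $\mathrm{NP}_1$-digital H-space is $(X,e,\mu)$ with $\mu:X\times X\to X$ $\mathrm{NP}_1$-continuous, $\mu\circ(\mathrm{id}_X,c_e)\simeq_1\mathrm{id}_X$, $\mu\circ(c_e,\mathrm{id}_X)\simeq_1\mathrm{id}_X$ ($(f,g)(x)=(f(x),g(x))$, $c_e$ constant); it is a pointed H-space if these homotopies are pointed; unital if the composites equal $\mathrm{id}_X$. It is pointed homotopy-associative if $\mu\circ(\mathrm{id}\times\mu)$ and $\mu\circ(\mu\times\mathrm{id})$ are homotopic by a pointed $\mathrm{NP}_1$-homotopy $(X\times X\times X,(e,e,e))\times[0,k]_{\mathbb{Z}}\to(X,e)$. Pointed H-equivalence: continuous pointed maps $f,g$ between the H-spaces with $f\circ g\simeq\mathrm{id}$, $g\circ f\simeq\mathrm{id}$, $f\circ\mu_X\simeq\mu_Y\circ(f\times f)$, $g\circ\mu_Y\simeq\mu_X\circ(g\times g)$, all by pointed $\mathrm{NP}_1$-homotopies. An $\mathrm{NP}_1$-digital topological group is a digital image with a group structure whose multiplication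 is $\mathrm{NP}_1$-continuous and inversion continuous. *)

theory Defs
  imports "HOL-Algebra.Group"
begin

record 'a dimg =
  verts :: "'a set"
  adj :: "'a \<Rightarrow> 'a \<Rightarrow> bool"

definition digital_image :: "'a dimg \<Rightarrow> bool" where
  "digital_image X \<longleftrightarrow> finite (verts X)
     \<and> (\<forall>x\<in>verts X. adj X x x)
     \<and> (\<forall>x y. adj X x y \<longrightarrow> adj X y x)
     \<and> (\<forall>x y. adj X x y \<longrightarrow> x \<in> verts X \<and> y \<in> verts X)"

definition dcont :: "'a dimg \<Rightarrow> 'b dimg \<Rightarrow> ('a \<Rightarrow> 'b) \<Rightarrow> bool" where
  "dcont X Y f \<longleftrightarrow> (\<forall>x\<in>verts X. f x \<in> verts Y)
     \<and> (\<forall>x\<in>verts X. \<forall>y\<in>verts X. adj X x y \<longrightarrow> adj Y (f x) (f y))"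

text \<open>NP_1 product: tuples differing in at most one coordinate, adjacent there.
  The triple product is the iterate np1 X (np1 X Y), which is the same relation.\<close>
definition np1 :: "'a dimg \<Rightarrow> 'b dimg \<Rightarrow> ('a \<times> 'b) dimg" where
  "np1 X Y = \<lparr> verts = verts X \<times> verts Y,
     adj = (\<lambda>(x,y) (x',y'). (x = x' \<and> x \<in> verts X \<and> adj Y y y')
                          \<or> (y = y' \<and> y \<in> verts Y \<and> adj X x x')) \<rparr>"

definition dinterval :: "nat \<Rightarrow> nat dimg" where
  "dinterval m = \<lparr> verts = {0..m},
     adj = (\<lambda>s t. s \<le> m \<and> t \<le> m \<and> s \<le> t + 1 \<and> t \<le> s + 1) \<rparr>"

definition np1_homotopic :: "'a dimg \<Rightarrow> 'b dimg \<Rightarrow> ('a \<Rightarrow> 'b) \<Rightarrow> ('a \<Rightarrow> 'b) \<Rightarrow> bool" where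
  "np1_homotopic X Y f g \<longleftrightarrow> (\<exists>m H.
      dcont (np1 X (dinterval m)) Y (\<lambda>(x,t). H x t)
      \<and> (\<forall>x\<in>verts X. H x 0 = f x \<and> H x m = g x))"

definition np1_pointed_homotopic ::
  "'a dimg \<Rightarrow> 'a \<Rightarrow> 'b dimg \<Rightarrow> 'b \<Rightarrow> ('a \<Rightarrow> 'b) \<Rightarrow> ('a \<Rightarrow> 'b) \<Rightarrow> bool" where
  "np1_pointed_homotopic X a Y b f g \<longleftrightarrow> (\<exists>m H.
      dcont (np1 X (dinterval m)) Y (\<lambda>(x,t). H x t)
      \<and> (\<forall>x\<in>verts X. H x 0 = f x \<and> H x m = g x)
      \<and> (\<forall>t\<le>m. H a t = b))"

definition np1_hspace :: "'a dimg \<Rightarrow> 'a \<Rightarrow> ('a \<times> 'a \<Rightarrow> 'a) \<Rightarrow> bool" where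
  "np1_hspace X e mu \<longleftrightarrow> digital_image X \<and> e \<in> verts X
     \<and> dcont (np1 X X) X mu
     \<and> np1_homotopic X X (\<lambda>x. mu (x, e)) id
     \<and> np1_homotopic X X (\<lambda>x. mu (e, x)) id"

definition np1_pointed_hspace :: "'a dimg \<Rightarrow> 'a \<Rightarrow> ('a \<times> 'a \<Rightarrow> 'a) \<Rightarrow> bool" where
  "np1_pointed_hspace X e mu \<longleftrightarrow> np1_hspace X e mu
     \<and> np1_pointed_homotopic X e X e (\<lambda>x. mu (x, e)) id
     \<and> np1_pointed_homotopic X e X e (\<lambda>x. mu (e, x)) id"

definition np1_unital_hspace :: "'a dimg \<Rightarrow> 'a \<Rightarrow> ('a \<times> 'a \<Rightarrow> 'a) \<Rightarrow> bool" where
  "np1_unital_hspace X e mu \<longleftrightarrow> np1_hspace X e mu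
     \<and> (\<forall>x\<in>verts X. mu (x, e) = x \<and> mu (e, x) = x)"

definition pointed_homotopy_associative :: "'a dimg \<Rightarrow> 'a \<Rightarrow> ('a \<times> 'a \<Rightarrow> 'a) \<Rightarrow> bool" where
  "pointed_homotopy_associative X e mu \<longleftrightarrow>
     np1_pointed_homotopic (np1 X (np1 X X)) (e, (e, e)) X e
       (\<lambda>(x, y, z). mu (x, mu (y, z))) (\<lambda>(x, y, z). mu (mu (x, y), z))"

definition pointed_H_equivalent ::
  "'a dimg \<Rightarrow> 'a \<Rightarrow> ('a \<times> 'a \<Rightarrow> 'a) \<Rightarrow> 'b dimg \<Rightarrow> 'b \<Rightarrow> ('b \<times> 'b \<Rightarrow> 'b) \<Rightarrow> bool" where
  "pointed_H_equivalent X e mu Y e' nu \<longleftrightarrow> (\<exists>f g.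
      dcont X Y f \<and> dcont Y X g \<and> f e = e' \<and> g e' = e
      \<and> np1_pointed_homotopic Y e' Y e' (f \<circ> g) id
      \<and> np1_pointed_homotopic X e X e (g \<circ> f) id
      \<and> np1_pointed_homotopic (np1 X X) (e, e) Y e' (f \<circ> mu) (\<lambda>(x, y). nu (f x, f y))
      \<and> np1_pointed_homotopic (np1 Y Y) (e', e') X e (g \<circ> nu) (\<lambda>(x, y). mu (g x, g y)))"

definition np1_digital_topological_group :: "'b dimg \<Rightarrow> 'b monoid \<Rightarrow> bool" where
  "np1_digital_topological_group Y G \<longleftrightarrow> digital_image Y \<and> group G
     \<and> carrier G = verts Y
     \<and> dcont (np1 Y Y) Y (\<lambda>(x, y). x \<otimes>\<^bsub>G\<^esub> y)
     \<and> dcont Y Y (\<lambda>x. inv\<^bsub>G\<^esub> x)"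

text \<open>P i stands for x_i (i < 5), Pbar for the extra vertex bar x_4.\<close>
datatype pt = P nat | Pbar

definition Xverts :: "pt set" where
  "Xverts = {P 0, P 1, P 2, P 3, P 4, Pbar}"

definition Xedges :: "(pt \<times> pt) set" where
  "Xedges = {(P 0, P 1), (P 1, P 2), (P 2, P 3), (P 3, P 4), (P 4, P 0),
             (P 3, Pbar), (Pbar, P 0)}"

definition Xex :: "pt dimg" where
  "Xex = \<lparr> verts = Xverts,
     adj = (\<lambda>a b. a \<in> Xverts \<and> b \<in> Xverts
                 \<and> (a = b \<or> (a, b) \<in> Xedges \<or> (b, a) \<in> Xedges)) \<rparr>"

fun tau :: "pt \<times> pt \<Rightarrow> pt" where
  "tau (P i, P j) = P ((i + j) mod 5)"
| "tau (P i, Pbar) = (if i = 0 then Pbar else P ((i + 4) mod 5))"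
| "tau (Pbar, P i) = (if i = 0 then Pbar else P ((i + 4) mod 5))"
| "tau (Pbar, Pbar) = P 3"

end

theory Submission
  imports Defs
begin

text \<open>
  X contains two 5-cycles through x0, namely x0 x1 x2 x3 x4 and x0 x1 x2 x3 x4bar. A closed walk of
  length 5 that stays pointwise adjacent to a traversal of one of them and meets it in one point
  coincides with it. So a pointed NP1-homotopy cannot move a map which sends each of these cycles,
  in each coordinate separately, once around a 5-cycle of X: such maps are rigid. Both tau and
  (x, y, z) |-> tau(x, tau(y, z)) are of this kind, and the latter differs from
  (x, y, z) |-> tau(tau(x, y), z) at (x1, x4bar, x4bar).

  For a pointed H-equivalence f, g with a digital topological group, rigidity of id and of tau gives
  g o f = id and tau(a, b) = g(f a * f b). Multiplying a homotopy f o g ~ id from the left shows that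
  (x, y, z) |-> g(f x * (f y * f z)) and, via the opposite multiplication and commutativity of tau,
  (x, y, z) |-> g((f z * f y) * f x) both equal tau(x, tau(y, z)). Evaluating at (x4bar, x4bar, x1)
  and at (x1, x4bar, x4bar), associativity of the group gives x4bar = x4.
\<close>

lemma dcont_vertex: "dcont X Y f \<Longrightarrow> x \<in> verts X \<Longrightarrow> f x \<in> verts Y"
  by (simp add: dcont_def)

lemma dcont_id: "dcont X X id"
  by (simp add: dcont_def)

lemma dcont_comp: "dcont X Y f \<Longrightarrow> dcont Y Z g \<Longrightarrow> dcont X Z (g \<circ> f)"
  by (simp add: dcont_def)

lemma dcont_map_prod:
  "dcont X X' f \<Longrightarrow> dcont Y Y' g \<Longrightarrow> dcont (np1 X Y) (np1 X' Y') (map_prod f g)"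
  unfolding dcont_def np1_def by auto

lemma dcont_np1_assoc: "dcont (np1 (np1 X Y) Z) (np1 X (np1 Y Z)) (\<lambda>((x, y), z). (x, (y, z)))"
  unfolding dcont_def np1_def by auto

lemma dcont_np1_swap: "dcont (np1 X Y) (np1 Y X) prod.swap"
  unfolding dcont_def np1_def by auto

lemma dcont_Pair: "x \<in> verts X \<Longrightarrow> dcont Y (np1 X Y) (Pair x)"
  unfolding dcont_def np1_def by auto

lemma dcont_Pair_left: "y \<in> verts Y \<Longrightarrow> dcont X (np1 X Y) (\<lambda>x. (x, y))"
  unfolding dcont_def np1_def by auto

lemma dcont_np1I:
  assumes "\<And>x. x \<in> verts X \<Longrightarrow> dcont Y Z (\<lambda>y. f (x, y))"
    and "\<And>y. y \<in> verts Y \<Longrightarrow> dcont X Z (\<lambda>x. f (x, y))"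
  shows "dcont (np1 X Y) Z f"
  using assms unfolding dcont_def np1_def by fastforce

definition np1_homotopy :: "'a dimg \<Rightarrow> 'b dimg \<Rightarrow> nat \<Rightarrow> ('a \<Rightarrow> nat \<Rightarrow> 'b) \<Rightarrow> bool" where
  "np1_homotopy X Y m H \<longleftrightarrow> dcont (np1 X (dinterval m)) Y (\<lambda>(x, t). H x t)"

lemma np1_pointed_homotopic_iff:
  "np1_pointed_homotopic X a Y b f g \<longleftrightarrow> (\<exists>m H. np1_homotopy X Y m H
     \<and> (\<forall>x\<in>verts X. H x 0 = f x \<and> H x m = g x) \<and> (\<forall>t\<le>m. H a t = b))"
  by (simp add: np1_pointed_homotopic_def np1_homotopy_def)

lemma np1_homotopy_adj_space:
  "np1_homotopy X Y m H \<Longrightarrow> x \<in> verts X \<Longrightarrow> x' \<in> verts X \<Longrightarrow> adj X x x' \<Longrightarrow> t \<le> m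
    \<Longrightarrow> adj Y (H x t) (H x' t)"
  unfolding np1_homotopy_def dcont_def np1_def dinterval_def by fastforce

lemma np1_homotopy_adj_time:
  assumes "np1_homotopy X Y m H" and "x \<in> verts X" and "Suc t \<le> m"
  shows "adj Y (H x (Suc t)) (H x t)"
proof -
  have "(x, Suc t) \<in> verts (np1 X (dinterval m))" and "(x, t) \<in> verts (np1 X (dinterval m))"
    and "adj (np1 X (dinterval m)) (x, Suc t) (x, t)"
    using assms(2,3) by (simp_all add: np1_def dinterval_def)
  then show ?thesis
    using assms(1) unfolding np1_homotopy_def dcont_def by fastforce
qed

lemma np1_homotopy_comp:
  assumes "np1_homotopy X Y m H" and "dcont Y Z g"
  shows "np1_homotopy X Z m (\<lambda>x t. g (H x t))"
proof -
  have "(\<lambda>(x, t). g (H x t)) = g \<circ> (\<lambda>(x, t). H x t)"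
    by (auto simp: fun_eq_iff)
  then show ?thesis
    using assms dcont_comp unfolding np1_homotopy_def by metis
qed

lemma np1_homotopy_precomp:
  assumes "np1_homotopy Y Z m H" and "dcont X Y f"
  shows "np1_homotopy X Z m (\<lambda>x t. H (f x) t)"
proof -
  have "(\<lambda>(x, t). H (f x) t) = (\<lambda>(y, t). H y t) \<circ> map_prod f id"
    by (auto simp: fun_eq_iff)
  then show ?thesis
    using assms dcont_comp dcont_map_prod dcont_id unfolding np1_homotopy_def by metis
qed

lemma dcont_dinterval_flip: "dcont (dinterval m) (dinterval m) (\<lambda>t. m - t)"
  unfolding dcont_def dinterval_def by auto

lemma np1_homotopy_reverse:
  assumes "np1_homotopy X Y m H"
  shows "np1_homotopy X Y m (\<lambda>x t. H x (m - t))"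
proof -
  have "(\<lambda>(x, t). H x (m - t)) = (\<lambda>(x, t). H x t) \<circ> map_prod id (\<lambda>t. m - t)"
    by (auto simp: fun_eq_iff)
  then show ?thesis
    using assms dcont_comp dcont_map_prod dcont_id dcont_dinterval_flip
    unfolding np1_homotopy_def by metis
qed

lemma np1_homotopy_mult_left:
  assumes "np1_homotopy W Y m H" and "dcont X Y f" and "dcont (np1 Y Y) Y mu"
  shows "np1_homotopy (np1 X W) Y m (\<lambda>(x, w) t. mu (f x, H w t))"
proof -
  have "dcont (np1 X (np1 W (dinterval m))) Y (mu \<circ> map_prod f (\<lambda>(w, t). H w t))"
    using assms dcont_comp dcont_map_prod unfolding np1_homotopy_def by blast
  then have "dcont (np1 (np1 X W) (dinterval m)) Y
      ((mu \<circ> map_prod f (\<lambda>(w, t). H w t)) \<circ> (\<lambda>((x, w), t). (x, (w, t))))"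
    using dcont_comp dcont_np1_assoc by blast
  moreover have "(mu \<circ> map_prod f (\<lambda>(w, t). H w t)) \<circ> (\<lambda>((x, w), t). (x, (w, t)))
      = (\<lambda>(p, t). (\<lambda>(x, w) t. mu (f x, H w t)) p t)"
    by (auto simp: fun_eq_iff)
  ultimately show ?thesis
    unfolding np1_homotopy_def by simp
qed

lemma np1_pointed_homotopic_refl:
  assumes "digital_image X" and "dcont X Y f" and "a \<in> verts X" and "\<forall>x\<in>verts X. g x = f x"
  shows "np1_pointed_homotopic X a Y (f a) f g"
proof -
  have "dcont (np1 X (dinterval 0)) Y (\<lambda>(x, t). f x)"
    using assms unfolding dcont_def np1_def dinterval_def digital_image_def by auto
  then show ?thesis
    unfolding np1_pointed_homotopic_iff np1_homotopy_def using assms(4)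
    by (intro exI[of _ 0] exI[of _ "\<lambda>x t. f x"]) auto
qed

lemma np1_pointed_homotopic_imp_homotopic:
  "np1_pointed_homotopic X a Y b f g \<Longrightarrow> np1_homotopic X Y f g"
  unfolding np1_pointed_homotopic_def np1_homotopic_def by blast

lemma np1_pointed_homotopic_sym:
  assumes "np1_pointed_homotopic X a Y b f g"
  shows "np1_pointed_homotopic X a Y b g f"
proof -
  obtain m H where "np1_homotopy X Y m H" "\<forall>x\<in>verts X. H x 0 = f x \<and> H x m = g x"
    "\<forall>t\<le>m. H a t = b"
    using assms unfolding np1_pointed_homotopic_iff by blast
  then show ?thesis
    unfolding np1_pointed_homotopic_iff
    by (intro exI[of _ m] exI[of _ "\<lambda>x t. H x (m - t)"]) (simp add: np1_homotopy_reverse)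
qed

lemma np1_pointed_homotopic_comp:
  assumes "np1_pointed_homotopic X a Y b f g" and "dcont Y Z h"
  shows "np1_pointed_homotopic X a Z (h b) (h \<circ> f) (h \<circ> g)"
proof -
  obtain m H where "np1_homotopy X Y m H" "\<forall>x\<in>verts X. H x 0 = f x \<and> H x m = g x"
    "\<forall>t\<le>m. H a t = b"
    using assms unfolding np1_pointed_homotopic_iff by blast
  then show ?thesis
    unfolding np1_pointed_homotopic_iff using assms(2)
    by (intro exI[of _ m] exI[of _ "\<lambda>x t. h (H x t)"]) (simp add: np1_homotopy_comp)
qed

lemma np1_pointed_homotopic_precomp:
  assumes "np1_pointed_homotopic X a Y b f g" and "dcont W X k" and "k c = a"
  shows "np1_pointed_homotopic W c Y b (f \<circ> k) (g \<circ> k)"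
proof -
  obtain m H where "np1_homotopy X Y m H" "\<forall>x\<in>verts X. H x 0 = f x \<and> H x m = g x"
    "\<forall>t\<le>m. H a t = b"
    using assms unfolding np1_pointed_homotopic_iff by blast
  then show ?thesis
    unfolding np1_pointed_homotopic_iff using assms(2,3)
    by (intro exI[of _ m] exI[of _ "\<lambda>x t. H (k x) t"]) (simp add: np1_homotopy_precomp dcont_vertex)
qed

lemma np1_pointed_homotopic_mult_left:
  assumes "np1_pointed_homotopic W c Y b f g" and "dcont X Y h" and "dcont (np1 Y Y) Y mu"
  shows "np1_pointed_homotopic (np1 X W) (a, c) Y (mu (h a, b))
           (\<lambda>(x, w). mu (h x, f w)) (\<lambda>(x, w). mu (h x, g w))"
proof -
  obtain m H where "np1_homotopy W Y m H" "\<forall>x\<in>verts W. H x 0 = f x \<and> H x m = g x"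
    "\<forall>t\<le>m. H c t = b"
    using assms unfolding np1_pointed_homotopic_iff by blast
  then show ?thesis
    unfolding np1_pointed_homotopic_iff using assms(2,3)
    by (intro exI[of _ m] exI[of _ "\<lambda>(x, w) t. mu (h x, H w t)"])
      (simp add: np1_homotopy_mult_left, simp add: np1_def)
qed

section \<open>The space X and its 5-cycles\<close>

lemma verts_Xex [simp]: "verts Xex = Xverts"
  by (simp add: Xex_def)

lemma P0_Xverts: "P 0 \<in> Xverts"
  by (simp add: Xverts_def)

lemma digital_image_Xex: "digital_image Xex"
  unfolding digital_image_def Xex_def Xverts_def Xedges_def by auto

fun Xnbhd :: "pt \<Rightarrow> pt set" where
  "Xnbhd (P i) = (if i = 0 then {P 0, P 1, P 4, Pbar} else if i = 1 then {P 0, P 1, P 2}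
     else if i = 2 then {P 1, P 2, P 3} else if i = 3 then {P 2, P 3, P 4, Pbar}
     else if i = 4 then {P 0, P 3, P 4} else {})"
| "Xnbhd Pbar = {P 0, P 3, Pbar}"

lemma adj_Xex_iff: "adj Xex a b \<longleftrightarrow> a \<in> Xnbhd b"
  by (cases b) (auto simp: Xex_def Xverts_def Xedges_def)

lemma adj_Xex_commute: "adj Xex a b \<longleftrightarrow> adj Xex b a"
  by (auto simp: Xex_def)

lemma tau_commute: "tau (a, b) = tau (b, a)"
  by (cases a; cases b) (simp_all add: add.commute)

lemma tau_unit: "x \<in> Xverts \<Longrightarrow> tau (x, P 0) = x"
  by (auto simp: Xverts_def)

lemma dcont_tau: "dcont (np1 Xex Xex) Xex tau"
proof (rule dcont_np1I)
  show "dcont Xex Xex (\<lambda>b. tau (a, b))" if "a \<in> verts Xex" for a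
    using that unfolding verts_Xex Xverts_def
    by (elim insertE; simp; auto simp: dcont_def Xex_def Xverts_def Xedges_def)
  then show "dcont Xex Xex (\<lambda>a. tau (a, b))" if "b \<in> verts Xex" for b
    using that by (simp add: tau_commute[of _ b])
qed

lemma all_less_5: "(\<forall>i<5. Q i) \<longleftrightarrow> Q 0 \<and> Q 1 \<and> Q 2 \<and> Q 3 \<and> Q (4 :: nat)"
  by (auto simp: less_Suc_eq numeral_eq_Suc)

definition loop5 :: "pt \<Rightarrow> nat \<Rightarrow> pt" where
  "loop5 v i = (if i mod 5 = 4 then v else P (i mod 5))"

lemma loop5_mod: "loop5 v (i mod 5) = loop5 v i"
  by (simp add: loop5_def)

lemma loop5_adj: "v \<in> {P 4, Pbar} \<Longrightarrow> adj Xex (loop5 v i) (loop5 v (Suc i))"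
  by (auto simp: loop5_def adj_Xex_iff mod_Suc)

lemma Xverts_loop5: "x \<in> Xverts \<Longrightarrow> \<exists>v\<in>{P 4, Pbar}. \<exists>i<5. x = loop5 v i"
proof -
  have "Xverts = loop5 (P 4) ` {0, 1, 2, 3, 4} \<union> {loop5 Pbar 4}"
    by (auto simp: Xverts_def loop5_def)
  moreover have "{0, 1, 2, 3, 4} \<subseteq> {..<5::nat}"
    by auto
  ultimately show "x \<in> Xverts \<Longrightarrow> ?thesis"
    by blast
qed

lemma closed_walk_near_loop5:
  assumes v: "v \<in> {P 4, Pbar}" and closed: "w 5 = w 0"
    and walk: "\<forall>i<5. adj Xex (w i) (w (Suc i))"
    and near: "\<forall>i<5. adj Xex (w i) (loop5 v (k + i))" and start: "w 0 = loop5 v k"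
  shows "\<forall>i<5. w i = loop5 v (k + i)"
proof -
  define j where "j = k mod 5"
  have shift: "loop5 v (k + i) = loop5 v (j + i)" for i
    by (simp add: j_def loop5_def mod_add_left_eq)
  have "j = 0 \<or> j = 1 \<or> j = 2 \<or> j = 3 \<or> j = 4"
    unfolding j_def by auto
  \<comment> \<open>exhaustive search, pruning each vertex of the walk by the neighbourhoods it must lie in\<close>
  then have brute: "\<forall>a1\<in>Xnbhd (loop5 v (j + 1)) \<inter> Xnbhd (loop5 v j).
      \<forall>a2\<in>Xnbhd (loop5 v (j + 2)) \<inter> Xnbhd a1. \<forall>a3\<in>Xnbhd (loop5 v (j + 3)) \<inter> Xnbhd a2.
      \<forall>a4\<in>Xnbhd (loop5 v (j + 4)) \<inter> Xnbhd a3 \<inter> Xnbhd (loop5 v j).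
      a1 = loop5 v (j + 1) \<and> a2 = loop5 v (j + 2) \<and> a3 = loop5 v (j + 3) \<and> a4 = loop5 v (j + 4)"
    using v by (elim disjE insertE emptyE) (simp_all add: loop5_def)
  have step: "w i \<in> Xnbhd (loop5 v (j + i)) \<inter> Xnbhd (w (i - 1))" if "0 < i" "i < 5" for i
    using walk[rule_format, of "i - 1"] near[rule_format, of i] that
    by (simp add: shift adj_Xex_iff[symmetric] adj_Xex_commute[of _ "w i"])
  have w0: "w 0 = loop5 v j"
    using start shift[of 0] by simp
  have "w 4 \<in> Xnbhd (loop5 v j)"
    using walk[rule_format, of 4] closed w0 by (simp add: adj_Xex_iff)
  then have "w 4 \<in> Xnbhd (loop5 v (j + 4)) \<inter> Xnbhd (w 3) \<inter> Xnbhd (loop5 v j)"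
    using step[of 4] by simp
  moreover have "w 1 \<in> Xnbhd (loop5 v (j + 1)) \<inter> Xnbhd (loop5 v j)"
    using step[of 1] w0 by simp
  moreover have "w 2 \<in> Xnbhd (loop5 v (j + 2)) \<inter> Xnbhd (w 1)"
    using step[of 2] by simp
  moreover have "w 3 \<in> Xnbhd (loop5 v (j + 3)) \<inter> Xnbhd (w 2)"
    using step[of 3] by simp
  ultimately have "w 1 = loop5 v (j + 1) \<and> w 2 = loop5 v (j + 2) \<and> w 3 = loop5 v (j + 3)
      \<and> w 4 = loop5 v (j + 4)"
    using brute by blast
  then show ?thesis
    using w0 shift by (simp add: all_less_5)
qed

definition winds :: "(pt \<Rightarrow> pt) \<Rightarrow> bool" where
  "winds F \<longleftrightarrow> (\<forall>v\<in>{P 4, Pbar}. \<exists>v'\<in>{P 4, Pbar}. \<exists>k. \<forall>i. F (loop5 v i) = loop5 v' (k + i))"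

lemma loop5_periodic_eq:
  assumes "\<forall>i<5. F (loop5 v i) = loop5 v' (k + i)"
  shows "F (loop5 v i) = loop5 v' (k + i)"
proof -
  have "F (loop5 v i) = loop5 v' (k + i mod 5)"
    using assms[rule_format, of "i mod 5"] loop5_mod[of v i] by simp
  also have "\<dots> = loop5 v' (k + i)"
    by (simp add: loop5_def mod_add_right_eq)
  finally show ?thesis .
qed

lemma winds_comp:
  assumes "winds F" and "winds G"
  shows "winds (F \<circ> G)"
  unfolding winds_def
proof
  fix v :: pt
  assume "v \<in> {P 4, Pbar}"
  then obtain v' k where v': "v' \<in> {P 4, Pbar}" and G: "\<forall>i. G (loop5 v i) = loop5 v' (k + i)"
    using assms(2) unfolding winds_def by blast
  then obtain v'' k' where "v'' \<in> {P 4, Pbar}" and "\<forall>i. F (loop5 v' i) = loop5 v'' (k' + i)"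
    using assms(1) unfolding winds_def by blast
  with G show "\<exists>v''\<in>{P 4, Pbar}. \<exists>k. \<forall>i. (F \<circ> G) (loop5 v i) = loop5 v'' (k + i)"
    by (intro bexI[of _ v''] exI[of _ "k' + k"]) (simp_all add: add.assoc)
qed

lemma winds_tau:
  assumes "a \<in> Xverts"
  shows "winds (\<lambda>b. tau (a, b))"
  unfolding winds_def
proof
  fix v :: pt
  assume v: "v \<in> {P 4, Pbar}"
  have "\<exists>v'\<in>{P 4, Pbar}. \<exists>k. \<forall>i<5. tau (a, loop5 v i) = loop5 v' (k + i)"
  proof (cases a)
    case (P i)
    \<comment> \<open>tau(x_i, -) rotates the cycle by i, but sends x4bar to x_(i+4) unless i = 0\<close>
    then have "i = 0 \<or> i = 1 \<or> i = 2 \<or> i = 3 \<or> i = 4"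
      using assms by (auto simp: Xverts_def)
    then show ?thesis
      using v P
      by (intro bexI[of _ "if i = 0 then v else P 4"] exI[of _ i]; elim disjE insertE emptyE)
        (simp_all add: all_less_5 loop5_def)
  next
    case Pbar
    then show ?thesis
      using v by (intro bexI[of _ Pbar] exI[of _ 4]; elim insertE emptyE) (simp_all add: all_less_5 loop5_def)
  qed
  then show "\<exists>v'\<in>{P 4, Pbar}. \<exists>k. \<forall>i. tau (a, loop5 v i) = loop5 v' (k + i)"
    using loop5_periodic_eq by meson
qed

lemma loop5_Xverts: "v \<in> {P 4, Pbar} \<Longrightarrow> loop5 v i \<in> Xverts"
  by (auto simp: loop5_def Xverts_def)

lemma np1_homotopy_loop5_stationary:
  assumes H: "np1_homotopy Xex Xex m H" and v: "v \<in> {P 4, Pbar}" and v': "v' \<in> {P 4, Pbar}"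
    and start: "\<forall>i. H (loop5 v i) 0 = loop5 v' (k + i)"
    and base: "\<forall>t\<le>m. H (P 0) t = loop5 v' k"
  shows "t \<le> m \<Longrightarrow> \<forall>i<5. H (loop5 v i) t = loop5 v' (k + i)"
proof (induction t)
  case 0
  then show ?case using start by simp
next
  case (Suc t)
  let ?w = "\<lambda>i. H (loop5 v i) (Suc t)"
  have "?w 5 = ?w 0"
    by (simp add: loop5_def)
  moreover have "\<forall>i<5. adj Xex (?w i) (?w (Suc i))"
    using np1_homotopy_adj_space[OF H _ _ loop5_adj[OF v] Suc.prems] loop5_Xverts[OF v] by simp
  moreover have "\<forall>i<5. adj Xex (?w i) (loop5 v' (k + i))"
  proof (intro allI impI)
    fix i :: nat
    assume "i < 5"
    then have "H (loop5 v i) t = loop5 v' (k + i)"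
      using Suc by simp
    moreover have "adj Xex (?w i) (H (loop5 v i) t)"
      using np1_homotopy_adj_time[OF H _ Suc.prems] loop5_Xverts[OF v] by simp
    ultimately show "adj Xex (?w i) (loop5 v' (k + i))"
      by simp
  qed
  moreover have "?w 0 = loop5 v' k"
    using base Suc.prems by (simp add: loop5_def)
  ultimately show ?case
    by (rule closed_walk_near_loop5[OF v'])
qed

section \<open>Rigid maps\<close>

definition homotopy_rigid :: "'a dimg \<Rightarrow> 'a \<Rightarrow> ('a \<Rightarrow> pt) \<Rightarrow> bool" where
  "homotopy_rigid X a F \<longleftrightarrow> (\<forall>m H. np1_homotopy X Xex m H \<and> (\<forall>x\<in>verts X. H x 0 = F x)
     \<and> (\<forall>t\<le>m. H a t = F a) \<longrightarrow> (\<forall>x\<in>verts X. \<forall>t\<le>m. H x t = F x))"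

lemma homotopy_rigidD:
  assumes "homotopy_rigid X a F" and "np1_homotopy X Xex m H" and "\<forall>x\<in>verts X. H x 0 = F x"
    and "\<forall>t\<le>m. H a t = F a" and "x \<in> verts X" and "t \<le> m"
  shows "H x t = F x"
  using assms(1)[unfolded homotopy_rigid_def, rule_format, of m H] assms(2-6) by blast

lemma homotopy_rigid_Xex:
  assumes "winds F"
  shows "homotopy_rigid Xex (P 0) F"
  unfolding homotopy_rigid_def
proof (intro allI impI ballI, elim conjE)
  fix m H x t
  assume H: "np1_homotopy Xex Xex m H" and start: "\<forall>x\<in>verts Xex. H x 0 = F x"
    and base: "\<forall>t\<le>m. H (P 0) t = F (P 0)" and x: "x \<in> verts Xex" and t: "t \<le> m"
  obtain v i where v: "v \<in> {P 4, Pbar}" and i: "i < 5" and xi: "x = loop5 v i"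
    using Xverts_loop5[of x] x by (auto simp only: verts_Xex)
  obtain v' k where v': "v' \<in> {P 4, Pbar}" and Fv: "\<forall>i. F (loop5 v i) = loop5 v' (k + i)"
    using assms v unfolding winds_def by blast
  have "\<forall>i. H (loop5 v i) 0 = loop5 v' (k + i)"
    using start Fv loop5_Xverts[OF v] by simp
  moreover have "\<forall>t\<le>m. H (P 0) t = loop5 v' k"
    using base Fv[rule_format, of 0] by (simp add: loop5_def)
  ultimately have "H (loop5 v i) t = loop5 v' (k + i)"
    using np1_homotopy_loop5_stationary[OF H v v'] t i by blast
  then show "H x t = F x"
    using xi Fv by simp
qed

lemma homotopy_rigid_np1:
  assumes b: "b \<in> verts B" and row: "homotopy_rigid A a (\<lambda>x. F (x, b))"
    and cols: "\<forall>x\<in>verts A. homotopy_rigid B b (\<lambda>y. F (x, y))"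
  shows "homotopy_rigid (np1 A B) (a, b) F"
  unfolding homotopy_rigid_def
proof (intro allI impI, elim conjE)
  fix m H
  assume H: "np1_homotopy (np1 A B) Xex m H" and start: "\<forall>p\<in>verts (np1 A B). H p 0 = F p"
    and base: "\<forall>t\<le>m. H (a, b) t = F (a, b)"
  have "H (x, b) t = F (x, b)" if "x \<in> verts A" "t \<le> m" for x t
    using homotopy_rigidD[OF row np1_homotopy_precomp[OF H dcont_Pair_left[OF b]]] start base b that
    by (simp add: np1_def)
  then have "H (x, y) t = F (x, y)" if "x \<in> verts A" "y \<in> verts B" "t \<le> m" for x y t
    using homotopy_rigidD[OF cols[rule_format, OF that(1)] np1_homotopy_precomp[OF H dcont_Pair[OF that(1)]]]
      start that by (simp add: np1_def)
  then show "\<forall>p\<in>verts (np1 A B). \<forall>t\<le>m. H p t = F p"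
    by (auto simp: np1_def)
qed

lemma homotopy_rigid_pointed_homotopic_eq:
  assumes rigid: "homotopy_rigid X a F" and a: "a \<in> verts X"
    and hom: "np1_pointed_homotopic X a Xex b F' G" and F': "\<forall>x\<in>verts X. F' x = F x"
  shows "\<forall>x\<in>verts X. G x = F x"
proof -
  obtain m H where H: "np1_homotopy X Xex m H" and ends: "\<forall>x\<in>verts X. H x 0 = F' x \<and> H x m = G x"
    and base: "\<forall>t\<le>m. H a t = b"
    using hom unfolding np1_pointed_homotopic_iff by blast
  have start: "\<forall>x\<in>verts X. H x 0 = F x"
    using ends F' by simp
  then have pointed: "\<forall>t\<le>m. H a t = F a"
    using base base[rule_format, of 0] a by simp
  show ?thesis
  proof
    fix x
    assume x: "x \<in> verts X"
    then have "H x m = F x"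
      using homotopy_rigidD[OF rigid H start pointed x] by simp
    then show "G x = F x"
      using ends x by simp
  qed
qed

lemma winds_tau_right:
  assumes "b \<in> Xverts"
  shows "winds (\<lambda>a. tau (a, b))"
proof -
  have "(\<lambda>a. tau (a, b)) = (\<lambda>a. tau (b, a))"
    by (rule ext) (rule tau_commute)
  then show ?thesis
    using winds_tau[OF assms] by simp
qed

lemma homotopy_rigid_tau: "homotopy_rigid (np1 Xex Xex) (P 0, P 0) tau"
  by (rule homotopy_rigid_np1)
    (simp_all add: P0_Xverts homotopy_rigid_Xex winds_tau winds_tau_right)

lemma homotopy_rigid_tau_assoc:
  "homotopy_rigid (np1 Xex (np1 Xex Xex)) (P 0, P 0, P 0) (\<lambda>(x, y, z). tau (x, tau (y, z)))"
proof (rule homotopy_rigid_np1)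
  show "(P 0, P 0) \<in> verts (np1 Xex Xex)"
    by (simp add: np1_def P0_Xverts)
  show "homotopy_rigid Xex (P 0) (\<lambda>x. case (x, P 0, P 0) of (x, y, z) \<Rightarrow> tau (x, tau (y, z)))"
    using homotopy_rigid_Xex[OF winds_tau_right[OF P0_Xverts]] by simp
  show "\<forall>x\<in>verts Xex. homotopy_rigid (np1 Xex Xex) (P 0, P 0)
          (\<lambda>p. case (x, p) of (x, y, z) \<Rightarrow> tau (x, tau (y, z)))"
  proof
    fix x
    assume x: "x \<in> verts Xex"
    have "homotopy_rigid (np1 Xex Xex) (P 0, P 0) (\<lambda>p. tau (x, tau p))"
    proof (rule homotopy_rigid_np1)
      show "P 0 \<in> verts Xex"
        by (simp add: P0_Xverts)
      show "homotopy_rigid Xex (P 0) (\<lambda>y. tau (x, tau (y, P 0)))"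
        using homotopy_rigid_Xex[OF winds_comp[OF winds_tau winds_tau_right[OF P0_Xverts]]] x
        by (simp add: comp_def)
      show "\<forall>y\<in>verts Xex. homotopy_rigid Xex (P 0) (\<lambda>z. tau (x, tau (y, z)))"
        using homotopy_rigid_Xex[OF winds_comp[OF winds_tau winds_tau]] x
        by (simp add: comp_def)
    qed
    then show "homotopy_rigid (np1 Xex Xex) (P 0, P 0)
          (\<lambda>p. case (x, p) of (x, y, z) \<Rightarrow> tau (x, tau (y, z)))"
      by simp
  qed
qed

lemma winds_id: "winds id"
  unfolding winds_def by (auto intro!: exI[of _ 0])

lemma tau_Xverts: "a \<in> Xverts \<Longrightarrow> b \<in> Xverts \<Longrightarrow> tau (a, b) \<in> Xverts"
  using dcont_vertex[OF dcont_tau, of "(a, b)"] by (simp add: np1_def)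

lemma not_pointed_homotopy_associative_tau: "\<not> pointed_homotopy_associative Xex (P 0) tau"
proof
  let ?X3 = "np1 Xex (np1 Xex Xex)"
  assume "pointed_homotopy_associative Xex (P 0) tau"
  then have "np1_pointed_homotopic ?X3 (P 0, P 0, P 0) Xex (P 0)
      (\<lambda>(x, y, z). tau (x, tau (y, z))) (\<lambda>(x, y, z). tau (tau (x, y), z))"
    unfolding pointed_homotopy_associative_def .
  moreover have "(P 0, P 0, P 0) \<in> verts ?X3" and q: "(P 1, Pbar, Pbar) \<in> verts ?X3"
    by (simp_all add: np1_def Xverts_def)
  ultimately have "\<forall>p\<in>verts ?X3. (\<lambda>(x, y, z). tau (tau (x, y), z)) p = (\<lambda>(x, y, z). tau (x, tau (y, z))) p"
    using homotopy_rigid_pointed_homotopic_eq[OF homotopy_rigid_tau_assoc] by blast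
  from bspec[OF this q] show False
    by simp
qed

lemma tau_assoc_eq_transferred_mult:
  assumes f: "dcont Xex Y f" and g: "dcont Y Xex g" and mu: "dcont (np1 Y Y) Y mu"
    and f0: "f (P 0) = e" and g0: "g e = P 0" and mu0: "mu (e, e) = e"
    and fg: "np1_pointed_homotopic Y e Y e (f \<circ> g) id"
    and tau: "\<forall>a\<in>Xverts. \<forall>b\<in>Xverts. g (mu (f a, f b)) = tau (a, b)"
  shows "\<forall>x\<in>Xverts. \<forall>y\<in>Xverts. \<forall>z\<in>Xverts. g (mu (f x, mu (f y, f z))) = tau (x, tau (y, z))"
proof -
  let ?k = "map_prod id (mu \<circ> map_prod f f)"
  have k: "dcont (np1 Xex (np1 Xex Xex)) (np1 Xex Y) ?k"
    using dcont_map_prod[OF dcont_id dcont_comp[OF dcont_map_prod[OF f f] mu]] .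
  have "np1_pointed_homotopic (np1 Xex Y) (P 0, e) Y e
      (\<lambda>(x, w). mu (f x, f (g w))) (\<lambda>(x, w). mu (f x, w))"
    using np1_pointed_homotopic_mult_left[OF fg f mu, of "P 0"] f0 mu0 by simp
  then have "np1_pointed_homotopic (np1 Xex (np1 Xex Xex)) (P 0, P 0, P 0) Y e
      ((\<lambda>(x, w). mu (f x, f (g w))) \<circ> ?k) ((\<lambda>(x, w). mu (f x, w)) \<circ> ?k)"
    by (rule np1_pointed_homotopic_precomp[OF _ k]) (simp add: f0 mu0)
  from np1_pointed_homotopic_comp[OF this g, unfolded g0]
  have "np1_pointed_homotopic (np1 Xex (np1 Xex Xex)) (P 0, P 0, P 0) Xex (P 0)
      (g \<circ> ((\<lambda>(x, w). mu (f x, f (g w))) \<circ> ?k)) (g \<circ> ((\<lambda>(x, w). mu (f x, w)) \<circ> ?k))" .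
  moreover have "\<forall>p\<in>verts (np1 Xex (np1 Xex Xex)).
      (g \<circ> ((\<lambda>(x, w). mu (f x, f (g w))) \<circ> ?k)) p = (\<lambda>(x, y, z). tau (x, tau (y, z))) p"
    using tau tau_Xverts by (auto simp: np1_def)
  ultimately have "\<forall>p\<in>verts (np1 Xex (np1 Xex Xex)).
      (g \<circ> ((\<lambda>(x, w). mu (f x, w)) \<circ> ?k)) p = (\<lambda>(x, y, z). tau (x, tau (y, z))) p"
    using homotopy_rigid_pointed_homotopic_eq[OF homotopy_rigid_tau_assoc] by (simp add: np1_def P0_Xverts)
  then show ?thesis
    by (simp add: np1_def)
qed

lemma pointed_H_equivalent_tauE:
  assumes "pointed_H_equivalent Xex (P 0) tau Y e mu"
  obtains f g where "dcont Xex Y f" and "dcont Y Xex g" and "f (P 0) = e" and "g e = P 0"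
    and "np1_pointed_homotopic Y e Y e (f \<circ> g) id"
    and "\<forall>a\<in>Xverts. \<forall>b\<in>Xverts. g (mu (f a, f b)) = tau (a, b)"
proof -
  obtain f g where f: "dcont Xex Y f" and g: "dcont Y Xex g" and f0: "f (P 0) = e" and g0: "g e = P 0"
    and fg: "np1_pointed_homotopic Y e Y e (f \<circ> g) id"
    and gf: "np1_pointed_homotopic Xex (P 0) Xex (P 0) (g \<circ> f) id"
    and ftau: "np1_pointed_homotopic (np1 Xex Xex) (P 0, P 0) Y e (f \<circ> tau)
                 (\<lambda>(x, y). mu (f x, f y))"
    using assms unfolding pointed_H_equivalent_def by blast
  have "\<forall>x\<in>verts Xex. (g \<circ> f) x = id x"
    using homotopy_rigid_pointed_homotopic_eq[OF homotopy_rigid_Xex[OF winds_id] _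
        np1_pointed_homotopic_sym[OF gf]] by (simp add: P0_Xverts)
  then have "\<forall>p\<in>verts (np1 Xex Xex). (g \<circ> (\<lambda>(x, y). mu (f x, f y))) p = tau p"
    using homotopy_rigid_pointed_homotopic_eq[OF homotopy_rigid_tau _
        np1_pointed_homotopic_comp[OF ftau g]] g0 tau_Xverts
    by (simp add: np1_def P0_Xverts)
  then have "\<forall>a\<in>Xverts. \<forall>b\<in>Xverts. g (mu (f a, f b)) = tau (a, b)"
    by (simp add: np1_def)
  with f g f0 g0 fg show ?thesis
    using that by blast
qed

lemma not_pointed_H_equivalent_group:
  assumes "np1_digital_topological_group Y G"
  shows "\<not> pointed_H_equivalent Xex (P 0) tau Y \<one>\<^bsub>G\<^esub> (\<lambda>(x, y). x \<otimes>\<^bsub>G\<^esub> y)"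
proof
  let ?mu = "\<lambda>(x, y). x \<otimes>\<^bsub>G\<^esub> y"
  assume "pointed_H_equivalent Xex (P 0) tau Y \<one>\<^bsub>G\<^esub> ?mu"
  then obtain f g where f: "dcont Xex Y f" and g: "dcont Y Xex g"
    and f0: "f (P 0) = \<one>\<^bsub>G\<^esub>" and g0: "g \<one>\<^bsub>G\<^esub> = P 0"
    and fg: "np1_pointed_homotopic Y \<one>\<^bsub>G\<^esub> Y \<one>\<^bsub>G\<^esub> (f \<circ> g) id"
    and tau_mult: "\<forall>a\<in>Xverts. \<forall>b\<in>Xverts. g (f a \<otimes>\<^bsub>G\<^esub> f b) = tau (a, b)"
    by (rule pointed_H_equivalent_tauE) simp
  from assms have "group G" and carrier: "carrier G = verts Y" and mu: "dcont (np1 Y Y) Y ?mu"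
    unfolding np1_digital_topological_group_def by auto
  then interpret group G
    by simp
  have P1: "P 1 \<in> Xverts" and Pbar: "Pbar \<in> Xverts"
    by (simp_all add: Xverts_def)
  have fG: "f x \<in> carrier G" if "x \<in> Xverts" for x
    using dcont_vertex[OF f] that carrier by simp
  have "\<forall>x\<in>Xverts. \<forall>y\<in>Xverts. \<forall>z\<in>Xverts.
      g (f x \<otimes>\<^bsub>G\<^esub> (f y \<otimes>\<^bsub>G\<^esub> f z)) = tau (x, tau (y, z))"
    using tau_assoc_eq_transferred_mult[OF f g mu f0 g0 _ fg] tau_mult by simp
  then have left: "g (f Pbar \<otimes>\<^bsub>G\<^esub> (f Pbar \<otimes>\<^bsub>G\<^esub> f (P 1))) = Pbar"
    using P1 Pbar by fastforce
  \<comment> \<open>the same argument for the opposite multiplication, which tau cannot tell apart\<close>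
  have "\<forall>x\<in>Xverts. \<forall>y\<in>Xverts. \<forall>z\<in>Xverts.
      g ((f z \<otimes>\<^bsub>G\<^esub> f y) \<otimes>\<^bsub>G\<^esub> f x) = tau (x, tau (y, z))"
    using tau_assoc_eq_transferred_mult[OF f g dcont_comp[OF dcont_np1_swap mu] f0 g0 _ fg]
      tau_mult tau_commute by simp
  then have right: "g ((f Pbar \<otimes>\<^bsub>G\<^esub> f Pbar) \<otimes>\<^bsub>G\<^esub> f (P 1)) = P 4"
    using P1 Pbar by fastforce
  show False
    using left right m_assoc fG P1 Pbar by simp
qed

theorem mainTheorem15:
  shows "dcont (np1 Xex Xex) Xex tau
       \<and> np1_unital_hspace Xex (P 0) tau
       \<and> np1_pointed_hspace Xex (P 0) tau
       \<and> \<not> pointed_homotopy_associative Xex (P 0) tau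
       \<and> \<not> (\<exists>(Y :: 'b dimg) (G :: 'b monoid).
              np1_digital_topological_group Y G
              \<and> pointed_H_equivalent Xex (P 0) tau Y \<one>\<^bsub>G\<^esub> (\<lambda>(x, y). x \<otimes>\<^bsub>G\<^esub> y))"
proof -
  have P0: "P 0 \<in> verts Xex"
    by (simp add: P0_Xverts)
  have unit: "\<forall>x\<in>verts Xex. tau (x, P 0) = x \<and> tau (P 0, x) = x"
    using tau_unit tau_commute by simp
  have right: "np1_pointed_homotopic Xex (P 0) Xex (P 0) (\<lambda>x. tau (x, P 0)) id"
    using np1_pointed_homotopic_sym[OF np1_pointed_homotopic_refl[OF digital_image_Xex dcont_id P0,
        of "\<lambda>x. tau (x, P 0)"]] unit by simp
  have left: "np1_pointed_homotopic Xex (P 0) Xex (P 0) (\<lambda>x. tau (P 0, x)) id"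
    using np1_pointed_homotopic_sym[OF np1_pointed_homotopic_refl[OF digital_image_Xex dcont_id P0,
        of "\<lambda>x. tau (P 0, x)"]] unit by simp
  have "np1_hspace Xex (P 0) tau"
    unfolding np1_hspace_def using digital_image_Xex P0 dcont_tau
      np1_pointed_homotopic_imp_homotopic[OF right] np1_pointed_homotopic_imp_homotopic[OF left]
    by blast
  then show ?thesis
    unfolding np1_unital_hspace_def np1_pointed_hspace_def
    using dcont_tau unit right left not_pointed_homotopy_associative_tau not_pointed_H_equivalent_group
    by blast
qed

end
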